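(* Let $p>1$, $0<\sigma<1/p$, and let $f$ be a differentiable function on $\mathbb{R}\setminus\{0\}$ such that for some constants $C>0$ and $\delta>1$ $$|f(\lambda)|\le\begin{cases}C|\lambda|^{-\sigma},&|\lambda|\le1,\\ C|\lambda|^{-\delta},&|\lambda|>1,\end{cases}\qquad |f'(\lambda)|\le\begin{cases}C|\lambda|^{-\sigma-1},&|\lambda|\le1,\\ C|\lambda|^{-\delta-1},&|\lambda|>1.\end{cases}$$ Then $f\in\mathrm{Lip}(\mathbb{R};p,1/p-\sigma)$.
   Context: For $\psi\in L^p(\mathbb{R})$, $1\le p\le\infty$, $\omega_p(\psi,\delta):=\sup_{0<h\le\delta}\|\psi(\cdot+h)-\psi(\cdot)\|_p$, and for $0<\gamma\le1$, $\mathrm{Lip}(\mathbb{R};p,\gamma):=\{\psi\in L^p(\mathbb{R}):\omega_p(\psi,\delta)=O(\delta^\gamma)\text{ as }\delta\to0\}$. *)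

theory Defs
  imports "HOL-Analysis.Analysis" "HOL-Library.Landau_Symbols"
begin

definition in_Lp :: "real \<Rightarrow> (real \<Rightarrow> complex) \<Rightarrow> bool" where
  "in_Lp p \<psi> \<longleftrightarrow> \<psi> \<in> borel_measurable lebesgue \<and>
     integrable lebesgue (\<lambda>x. norm (\<psi> x) powr p)"

definition Lp_norm :: "real \<Rightarrow> (real \<Rightarrow> complex) \<Rightarrow> real" where
  "Lp_norm p \<psi> = (LINT x|lebesgue. norm (\<psi> x) powr p) powr (1 / p)"

definition omega_p :: "real \<Rightarrow> (real \<Rightarrow> complex) \<Rightarrow> real \<Rightarrow> real" where
  "omega_p p \<psi> \<delta> = (SUP h\<in>{0<..\<delta>}. Lp_norm p (\<lambda>x. \<psi> (x + h) - \<psi> x))"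

definition Lip_class :: "real \<Rightarrow> real \<Rightarrow> (real \<Rightarrow> complex) set" where
  "Lip_class p \<gamma> = {\<psi>. in_Lp p \<psi> \<and> omega_p p \<psi> \<in> O[at_right 0](\<lambda>\<delta>. \<delta> powr \<gamma>)}"

end

theory Submission
  imports Defs
begin

text \<open>
  The increment \<open>f (x + h) - f x\<close> is bounded by the size of \<open>f\<close> where \<open>|x| \<le> 2h\<close>, and by
  the mean value theorem and the bound on \<open>f'\<close> where \<open>|x| > 2h\<close>. Both bounds scale alike:
  \<open>|f (x + h) - f x| \<le> h powr -\<sigma> * g (x / h)\<close> for one profile \<open>g\<close> that behaves like
  \<open>|t| powr -\<sigma>\<close> near \<open>t = 0\<close> and \<open>t = -1\<close> and like \<open>|t| powr (-\<sigma> - 1)\<close> at infinity, so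
  \<open>g powr p\<close> is integrable precisely because \<open>\<sigma> p < 1 < (\<sigma> + 1) p\<close>. The substitution
  \<open>x = h t\<close> then gives \<open>\<integral> |f (x + h) - f x| powr p \<le> h powr (1 - \<sigma> p) * \<integral> g powr p\<close>, that is
  \<open>\<omega>\<^sub>p(f, h) = O(h powr (1/p - \<sigma>))\<close>.
\<close>

lemma powr_add_le_two_powr:
  fixes u v p :: real
  assumes "0 \<le> u" "0 \<le> v" "0 \<le> p"
  shows "(u + v) powr p \<le> 2 powr p * (u powr p + v powr p)"
proof -
  have "(u + v) powr p \<le> (2 * max u v) powr p"
    using assms by (intro powr_mono2) auto
  also have "\<dots> = 2 powr p * max u v powr p"
    using assms by (simp add: powr_mult)
  also have "\<dots> \<le> 2 powr p * (u powr p + v powr p)"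
    by (intro mult_left_mono) (auto simp: max_def)
  finally show ?thesis .
qed

lemma integrable_even_powr:
  fixes a I :: real and S :: "real set"
  assumes "((\<lambda>x. x powr a) has_integral I) S" "S \<subseteq> {0..}" "S \<in> sets borel"
  shows "integrable lborel (\<lambda>x. indicator S \<bar>x\<bar> * \<bar>x\<bar> powr a)"
proof -
  define P where "P x = indicator S x * x powr a" for x :: real
  have [measurable]: "S \<in> sets borel" by (fact assms(3))
  have "(\<lambda>x. x powr a) absolutely_integrable_on S"
    using assms(1) by (intro nonnegative_absolutely_integrable_1) auto
  then have "integrable lborel P"
    unfolding set_integrable_def P_def by (subst (asm) integrable_completion) auto
  then have "integrable lborel (\<lambda>x. P x + P (-x))"
    using lborel_integrable_real_affine_iff[of "-1" P 0] by auto
  then show ?thesis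
  proof (rule Bochner_Integration.integrable_bound)
    have "indicator S \<bar>x\<bar> * \<bar>x\<bar> powr a \<le> P x + P (-x)" for x
      by (cases "x \<ge> 0") (auto simp: P_def indicator_def)
    then show "AE x in lborel. norm (indicator S \<bar>x\<bar> * \<bar>x\<bar> powr a) \<le> norm (P x + P (-x))"
      by (intro AE_I2) (auto intro: order_trans[OF _ abs_ge_self])
  qed measurable
qed

lemma integrable_abs_powr_near_0:
  assumes "a > -1" "c \<ge> 0"
  shows "integrable lborel (\<lambda>x. indicator {0..c} \<bar>x\<bar> * \<bar>x\<bar> powr a :: real)"
  by (rule integrable_even_powr[OF has_integral_powr_from_0]) (use assms in auto)

lemma integrable_abs_powr_near_infinity:
  assumes "e < -1" "c > 0"
  shows "integrable lborel (\<lambda>x. indicator {c..} \<bar>x\<bar> * \<bar>x\<bar> powr e :: real)"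
  by (rule integrable_even_powr[OF has_integral_powr_to_inf]) (use assms in auto)

lemma integral_le_dilation:
  fixes \<phi> G :: "real \<Rightarrow> real"
  assumes G: "integrable lborel G" and [measurable]: "\<phi> \<in> borel_measurable borel" and "h > 0"
    and bound: "AE x in lborel. norm (\<phi> x) \<le> G (x / h)"
  shows "integrable lborel \<phi>" and "integral\<^sup>L lborel \<phi> \<le> h * integral\<^sup>L lborel G"
proof -
  have G_dilated: "integrable lborel (\<lambda>x. G (x / h))"
    using lborel_integrable_real_affine_iff[of "1 / h" G 0] G \<open>h > 0\<close> by simp
  then show "integrable lborel \<phi>"
    by (rule Bochner_Integration.integrable_bound) (use bound in auto)
  then have "integral\<^sup>L lborel \<phi> \<le> integral\<^sup>L lborel (\<lambda>x. G (x / h))"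
    using G_dilated by (rule integral_mono_AE) (use bound in \<open>auto elim: AE_mp\<close>)
  also have "\<dots> = h * integral\<^sup>L lborel G"
    using lborel_integral_real_affine[of h "\<lambda>x. G (x / h)" 0] \<open>h > 0\<close> by simp
  finally show "integral\<^sup>L lborel \<phi> \<le> h * integral\<^sup>L lborel G" .
qed

lemma abs_powr_rescale:
  fixes h x a :: real
  assumes "h > 0"
  shows "\<bar>x\<bar> powr a = h powr a * \<bar>x / h\<bar> powr a"
  using assms by (simp add: powr_divide)

lemma norm_increment_le_far_from_0:
  fixes f f' :: "real \<Rightarrow> 'a::real_inner"
  assumes der: "\<And>y. y \<noteq> 0 \<Longrightarrow> (f has_vector_derivative f' y) (at y)"
    and bound: "\<And>y. y \<noteq> 0 \<Longrightarrow> norm (f' y) \<le> C * \<bar>y\<bar> powr e"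
    and "e \<le> 0" "C \<ge> 0" "h > 0" "2 * h < \<bar>x\<bar>"
  shows "norm (f (x + h) - f x) \<le> 2 powr (-e) * C * h * \<bar>x\<bar> powr e"
proof -
  have nz: "y \<noteq> 0" if "y \<in> {x..x+h}" for y
    using assms(5,6) that by auto
  have "continuous_on {x..x+h} f"
    by (rule continuous_on_vector_derivative) (rule has_vector_derivative_at_within[OF der[OF nz]])
  moreover have "(f has_derivative (\<lambda>t. t *\<^sub>R f' y)) (at y)" if "x < y" "y < x + h" for y
    using der[OF nz] that unfolding has_vector_derivative_def by auto
  ultimately obtain \<xi> where \<xi>: "\<xi> \<in> {x<..<x+h}"
    and mvt: "norm (f (x + h) - f x) \<le> norm ((x + h - x) *\<^sub>R f' \<xi>)"
    using mvt_general[of x "x + h" f "\<lambda>\<xi> t. t *\<^sub>R f' \<xi>"] \<open>h > 0\<close> by auto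
  have \<xi>_ge: "\<bar>x\<bar> / 2 \<le> \<bar>\<xi>\<bar>"
    using \<xi> assms(6) by auto
  then have "\<xi> \<noteq> 0"
    using assms(5,6) by auto
  have "norm (f (x + h) - f x) \<le> h * norm (f' \<xi>)"
    using mvt \<open>h > 0\<close> by simp
  also have "\<dots> \<le> h * (C * \<bar>\<xi>\<bar> powr e)"
    using bound[OF \<open>\<xi> \<noteq> 0\<close>] \<open>h > 0\<close> by (intro mult_left_mono) auto
  also have "\<dots> \<le> h * (C * (\<bar>x\<bar> / 2) powr e)"
    using \<xi>_ge assms by (intro mult_left_mono powr_mono2') auto
  also have "\<dots> = 2 powr (-e) * C * h * \<bar>x\<bar> powr e"
    by (simp add: powr_divide powr_minus_divide)
  finally show ?thesis .
qed

definition increment_profile :: "real \<Rightarrow> real \<Rightarrow> real \<Rightarrow> real" where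
  "increment_profile \<sigma> C t =
     (if \<bar>t\<bar> \<le> 2 then C * (\<bar>1 + t\<bar> powr (-\<sigma>) + \<bar>t\<bar> powr (-\<sigma>))
      else 2 powr (\<sigma> + 1) * C * \<bar>t\<bar> powr (-\<sigma> - 1))"

lemma norm_increment_le_profile:
  fixes f f' :: "real \<Rightarrow> 'a::real_inner"
  assumes der: "\<And>y. y \<noteq> 0 \<Longrightarrow> (f has_vector_derivative f' y) (at y)"
    and bound: "\<And>y. y \<noteq> 0 \<Longrightarrow> norm (f y) \<le> C * \<bar>y\<bar> powr (-\<sigma>)"
    and bound': "\<And>y. y \<noteq> 0 \<Longrightarrow> norm (f' y) \<le> C * \<bar>y\<bar> powr (-\<sigma> - 1)"
    and "\<sigma> \<ge> 0" "C \<ge> 0" "h > 0" "x \<noteq> 0" "x + h \<noteq> 0"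
  shows "norm (f (x + h) - f x) \<le> h powr (-\<sigma>) * increment_profile \<sigma> C (x / h)"
proof (cases "\<bar>x\<bar> \<le> 2 * h")
  case True
  have "norm (f (x + h) - f x) \<le> C * \<bar>x + h\<bar> powr (-\<sigma>) + C * \<bar>x\<bar> powr (-\<sigma>)"
    using norm_triangle_ineq4[of "f (x + h)" "f x"] bound[of x] bound[of "x + h"] assms(7,8)
    by linarith
  also have "\<dots> = h powr (-\<sigma>) * (C * (\<bar>1 + x / h\<bar> powr (-\<sigma>) + \<bar>x / h\<bar> powr (-\<sigma>)))"
    using abs_powr_rescale[OF \<open>h > 0\<close>, of "x + h"] abs_powr_rescale[OF \<open>h > 0\<close>, of x] \<open>h > 0\<close>
    by (simp add: add_divide_distrib algebra_simps)
  also have "\<dots> = h powr (-\<sigma>) * increment_profile \<sigma> C (x / h)"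
    using True \<open>h > 0\<close> by (simp add: increment_profile_def divide_le_eq)
  finally show ?thesis .
next
  case False
  have "norm (f (x + h) - f x) \<le> 2 powr (-(-\<sigma> - 1)) * C * h * \<bar>x\<bar> powr (-\<sigma> - 1)"
    using False assms by (intro norm_increment_le_far_from_0[OF der bound']) auto
  also have "\<dots> = h powr (-\<sigma>) * (2 powr (\<sigma> + 1) * C * \<bar>x / h\<bar> powr (-\<sigma> - 1))"
    using abs_powr_rescale[OF \<open>h > 0\<close>, of x "-\<sigma> - 1"] \<open>h > 0\<close>
    by (simp add: powr_diff powr_minus_divide field_simps)
  also have "\<dots> = h powr (-\<sigma>) * increment_profile \<sigma> C (x / h)"
    using False \<open>h > 0\<close> by (simp add: increment_profile_def divide_le_eq)
  finally show ?thesis .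
qed

lemma integrable_increment_profile_powr:
  assumes "\<sigma> > 0" "p \<ge> 1" "\<sigma> * p < 1" "C \<ge> 0"
  shows "integrable lborel (\<lambda>t. increment_profile \<sigma> C t powr p)"
proof -
  define near where "near t = indicator {0..3} \<bar>t\<bar> * \<bar>t\<bar> powr (-(\<sigma> * p))" for t :: real
  define far where "far t = indicator {2..} \<bar>t\<bar> * \<bar>t\<bar> powr ((-\<sigma> - 1) * p)" for t :: real
  define M where "M t = 2 powr p * C powr p * (near (1 + t) + near t) + (2 powr (\<sigma> + 1) * C) powr p * far t"
    for t
  have "\<sigma> * p > 0"
    using assms(1,2) by simp
  then have far_exponent: "(-\<sigma> - 1) * p < -1"
    using assms(2) by (simp add: left_diff_distrib)
  have "integrable lborel near"
    unfolding near_def using assms(3) by (intro integrable_abs_powr_near_0) auto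
  moreover have "integrable lborel far"
    unfolding far_def using far_exponent by (intro integrable_abs_powr_near_infinity) auto
  ultimately have "integrable lborel M"
    unfolding M_def using lborel_integrable_real_affine_iff[of 1 near 1] by auto
  then show ?thesis
  proof (rule Bochner_Integration.integrable_bound)
    show "(\<lambda>t. increment_profile \<sigma> C t powr p) \<in> borel_measurable lborel"
      unfolding increment_profile_def by measurable
    have "increment_profile \<sigma> C t powr p \<le> M t" for t
    proof (cases "\<bar>t\<bar> \<le> 2")
      case True
      have "increment_profile \<sigma> C t powr p
          \<le> 2 powr p * ((C * \<bar>1 + t\<bar> powr (-\<sigma>)) powr p + (C * \<bar>t\<bar> powr (-\<sigma>)) powr p)"
        using True assms powr_add_le_two_powr[of "C * \<bar>1 + t\<bar> powr (-\<sigma>)" "C * \<bar>t\<bar> powr (-\<sigma>)" p]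
        by (simp add: increment_profile_def distrib_left)
      also have "\<dots> = 2 powr p * C powr p * (near (1 + t) + near t)"
        using True assms by (simp add: near_def powr_mult powr_powr distrib_left)
      also have "\<dots> \<le> M t"
        unfolding M_def far_def by simp
      finally show ?thesis .
    next
      case False
      then have "increment_profile \<sigma> C t powr p = (2 powr (\<sigma> + 1) * C) powr p * far t"
        using assms by (simp add: increment_profile_def far_def powr_mult powr_powr)
      also have "\<dots> \<le> M t"
        unfolding M_def near_def by simp
      finally show ?thesis .
    qed
    then show "AE t in lborel. norm (increment_profile \<sigma> C t powr p) \<le> norm (M t)"
      by (intro AE_I2) (auto intro: order_trans[OF _ abs_ge_self])
  qed
qed

lemma Lp_norm_increment_le:
  fixes f f' :: "real \<Rightarrow> complex"
  assumes [measurable]: "f \<in> borel_measurable borel"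
    and der: "\<And>y. y \<noteq> 0 \<Longrightarrow> (f has_vector_derivative f' y) (at y)"
    and bound: "\<And>y. y \<noteq> 0 \<Longrightarrow> norm (f y) \<le> C * \<bar>y\<bar> powr (-\<sigma>)"
    and bound': "\<And>y. y \<noteq> 0 \<Longrightarrow> norm (f' y) \<le> C * \<bar>y\<bar> powr (-\<sigma> - 1)"
    and "\<sigma> > 0" "p \<ge> 1" "\<sigma> * p < 1" "C \<ge> 0" "h > 0"
  shows "Lp_norm p (\<lambda>x. f (x + h) - f x)
           \<le> (LINT t|lborel. increment_profile \<sigma> C t powr p) powr (1 / p) * h powr (1 / p - \<sigma>)"
proof -
  define K where "K = (LINT t|lborel. increment_profile \<sigma> C t powr p)"
  have K_nonneg: "K \<ge> 0"
    unfolding K_def by simp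
  have "AE x in lborel. x \<notin> {0, -h}"
    by (rule AE_not_in) (simp add: finite_imp_null_set_lborel)
  then have "AE x in lborel. norm (norm (f (x + h) - f x) powr p)
               \<le> h powr (-\<sigma> * p) * increment_profile \<sigma> C (x / h) powr p"
  proof (rule AE_mp, intro AE_I2 impI)
    fix x :: real
    assume "x \<notin> {0, -h}"
    then have "norm (f (x + h) - f x) \<le> h powr (-\<sigma>) * increment_profile \<sigma> C (x / h)"
      using assms by (intro norm_increment_le_profile[OF der bound bound']) auto
    then have "norm (f (x + h) - f x) powr p \<le> (h powr (-\<sigma>) * increment_profile \<sigma> C (x / h)) powr p"
      using \<open>p \<ge> 1\<close> by (intro powr_mono2) auto
    then show "norm (norm (f (x + h) - f x) powr p)
                 \<le> h powr (-\<sigma> * p) * increment_profile \<sigma> C (x / h) powr p"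
      using \<open>h > 0\<close> by (simp add: powr_mult powr_powr)
  qed
  then have "(LINT x|lborel. norm (f (x + h) - f x) powr p)
              \<le> h * (LINT t|lborel. h powr (-\<sigma> * p) * increment_profile \<sigma> C t powr p)"
    by (intro integral_le_dilation(2) integrable_mult_right integrable_increment_profile_powr)
       (use assms in auto)
  also have "\<dots> = h powr (1 - \<sigma> * p) * K"
    unfolding K_def using \<open>h > 0\<close> by (simp add: powr_diff powr_minus_divide)
  finally have "(LINT x|lebesgue. norm (f (x + h) - f x) powr p) \<le> h powr (1 - \<sigma> * p) * K"
    by (simp add: integral_completion)
  then have "Lp_norm p (\<lambda>x. f (x + h) - f x) \<le> (h powr (1 - \<sigma> * p) * K) powr (1 / p)"
    unfolding Lp_norm_def using \<open>p \<ge> 1\<close> by (intro powr_mono2) auto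
  also have "\<dots> = K powr (1 / p) * h powr (1 / p - \<sigma>)"
    using \<open>h > 0\<close> \<open>p \<ge> 1\<close> K_nonneg by (simp add: powr_mult powr_powr field_simps)
  finally show ?thesis
    unfolding K_def .
qed

lemma omega_p_bigo_powr:
  assumes "\<gamma> \<ge> 0" and bound: "\<And>h. h > 0 \<Longrightarrow> Lp_norm p (\<lambda>x. \<psi> (x + h) - \<psi> x) \<le> M * h powr \<gamma>"
  shows "omega_p p \<psi> \<in> O[at_right 0](\<lambda>\<delta>. \<delta> powr \<gamma>)"
proof (rule bigoI)
  have Lp_norm_nonneg: "Lp_norm p (\<lambda>x. \<psi> (x + h) - \<psi> x) \<ge> 0" for h
    unfolding Lp_norm_def by simp
  have "M \<ge> 0"
    using bound[of 1] Lp_norm_nonneg[of 1] by simp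
  have omega_bounds: "0 \<le> omega_p p \<psi> d \<and> omega_p p \<psi> d \<le> M * d powr \<gamma>" if "d > 0" for d
  proof -
    have le: "Lp_norm p (\<lambda>x. \<psi> (x + h) - \<psi> x) \<le> M * d powr \<gamma>" if "h \<in> {0<..d}" for h
      using bound[of h] that \<open>M \<ge> 0\<close> \<open>\<gamma> \<ge> 0\<close> mult_left_mono[OF powr_mono2[of \<gamma> h d] \<open>M \<ge> 0\<close>]
      by auto
    then have "bdd_above ((\<lambda>h. Lp_norm p (\<lambda>x. \<psi> (x + h) - \<psi> x)) ` {0<..d})"
      by (intro bdd_aboveI2) auto
    then have "Lp_norm p (\<lambda>x. \<psi> (x + d) - \<psi> x) \<le> omega_p p \<psi> d"
      unfolding omega_p_def by (rule cSUP_upper[rotated]) (use \<open>d > 0\<close> in auto)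
    moreover have "omega_p p \<psi> d \<le> M * d powr \<gamma>"
      unfolding omega_p_def using \<open>d > 0\<close> le by (intro cSUP_least) auto
    ultimately show ?thesis
      using Lp_norm_nonneg[of d] by linarith
  qed
  show "\<forall>\<^sub>F d in at_right 0. norm (omega_p p \<psi> d) \<le> M * norm (d powr \<gamma>)"
    using eventually_at_right_less[of "0::real"] by eventually_elim (use omega_bounds in auto)
qed

lemma norm_le_abs_powr_everywhere:
  fixes g :: "real \<Rightarrow> 'a::real_normed_vector"
  assumes "b \<le> a" "C \<ge> 0"
    and near: "\<And>x. x \<noteq> 0 \<Longrightarrow> \<bar>x\<bar> \<le> 1 \<Longrightarrow> norm (g x) \<le> C * \<bar>x\<bar> powr a"
    and far: "\<And>x. \<bar>x\<bar> > 1 \<Longrightarrow> norm (g x) \<le> C * \<bar>x\<bar> powr b"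
    and "x \<noteq> 0"
  shows "norm (g x) \<le> C * \<bar>x\<bar> powr a"
proof (cases "\<bar>x\<bar> \<le> 1")
  case False
  then have "norm (g x) \<le> C * \<bar>x\<bar> powr b"
    by (intro far) auto
  also have "\<dots> \<le> C * \<bar>x\<bar> powr a"
    using False assms(1,2) by (intro mult_left_mono powr_mono) auto
  finally show ?thesis .
qed (use near \<open>x \<noteq> 0\<close> in auto)

lemma in_Lp_of_abs_powr_bounds:
  fixes f :: "real \<Rightarrow> complex"
  assumes [measurable]: "f \<in> borel_measurable borel"
    and "p > 0" "\<sigma> * p < 1" "\<delta> * p > 1" "C \<ge> 0"
    and near: "\<And>x. x \<noteq> 0 \<Longrightarrow> \<bar>x\<bar> \<le> 1 \<Longrightarrow> norm (f x) \<le> C * \<bar>x\<bar> powr (-\<sigma>)"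
    and far: "\<And>x. \<bar>x\<bar> > 1 \<Longrightarrow> norm (f x) \<le> C * \<bar>x\<bar> powr (-\<delta>)"
  shows "in_Lp p f"
proof -
  define M where "M x = C powr p * (indicator {0..1} \<bar>x\<bar> * \<bar>x\<bar> powr (-\<sigma> * p)
                                    + indicator {1..} \<bar>x\<bar> * \<bar>x\<bar> powr (-\<delta> * p))" for x :: real
  have "integrable lborel M"
    unfolding M_def using assms(3,4)
    by (intro integrable_mult_right Bochner_Integration.integrable_add
        integrable_abs_powr_near_0 integrable_abs_powr_near_infinity) auto
  have pointwise: "norm (f x) powr p \<le> M x" if "x \<noteq> 0" for x
  proof (cases "\<bar>x\<bar> \<le> 1")
    case True
    then have "norm (f x) powr p \<le> (C * \<bar>x\<bar> powr (-\<sigma>)) powr p"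
      using near[OF that] \<open>p > 0\<close> by (intro powr_mono2) auto
    also have "\<dots> \<le> M x"
      using True \<open>C \<ge> 0\<close> by (auto simp: M_def powr_mult powr_powr intro!: mult_left_mono)
    finally show ?thesis .
  next
    case False
    then have "norm (f x) powr p \<le> (C * \<bar>x\<bar> powr (-\<delta>)) powr p"
      using far \<open>p > 0\<close> by (intro powr_mono2) auto
    also have "\<dots> \<le> M x"
      using False \<open>C \<ge> 0\<close> by (simp add: M_def powr_mult powr_powr)
    finally show ?thesis .
  qed
  have "AE x in lborel. x \<notin> {0}"
    by (rule AE_not_in) (simp add: finite_imp_null_set_lborel)
  then have "AE x in lborel. norm (norm (f x) powr p) \<le> norm (M x)"
    by eventually_elim (use pointwise in \<open>auto intro: order_trans[OF _ abs_ge_self]\<close>)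
  then have "integrable lborel (\<lambda>x. norm (f x) powr p)"
    by (rule Bochner_Integration.integrable_bound[OF \<open>integrable lborel M\<close>, rotated]) measurable
  then show ?thesis
    unfolding in_Lp_def by (simp add: integrable_completion measurable_completion)
qed

theorem lemma4p1:
  fixes f f' :: "real \<Rightarrow> complex" and p \<sigma> C \<delta> :: real
  assumes "p > 1" and "0 < \<sigma>" and "\<sigma> < 1 / p"
    and "C > 0" and "\<delta> > 1"
    and "\<And>x. x \<noteq> 0 \<Longrightarrow> (f has_vector_derivative f' x) (at x)"
    and "\<And>x. x \<noteq> 0 \<Longrightarrow> \<bar>x\<bar> \<le> 1 \<Longrightarrow> norm (f x) \<le> C * \<bar>x\<bar> powr (- \<sigma>)"
    and "\<And>x. \<bar>x\<bar> > 1 \<Longrightarrow> norm (f x) \<le> C * \<bar>x\<bar> powr (- \<delta>)"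
    and "\<And>x. x \<noteq> 0 \<Longrightarrow> \<bar>x\<bar> \<le> 1 \<Longrightarrow> norm (f' x) \<le> C * \<bar>x\<bar> powr (- \<sigma> - 1)"
    and "\<And>x. \<bar>x\<bar> > 1 \<Longrightarrow> norm (f' x) \<le> C * \<bar>x\<bar> powr (- \<delta> - 1)"
  shows "f \<in> Lip_class p (1 / p - \<sigma>)"
proof -
  have "\<sigma> * p < 1" "\<sigma> < \<delta>" "\<delta> * p > 1"
    using assms(1-3,5) less_1_mult[of \<delta> p] order.strict_trans[of \<sigma> "1 / p" 1]
    by (auto simp: less_divide_eq)
  have bound: "norm (f x) \<le> C * \<bar>x\<bar> powr (-\<sigma>)" if "x \<noteq> 0" for x
    by (rule norm_le_abs_powr_everywhere[where b = "-\<delta>"])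
       (use assms(4,7,8) \<open>\<sigma> < \<delta>\<close> that in auto)
  have bound': "norm (f' x) \<le> C * \<bar>x\<bar> powr (-\<sigma> - 1)" if "x \<noteq> 0" for x
    by (rule norm_le_abs_powr_everywhere[where b = "-\<delta> - 1"])
       (use assms(4,9,10) \<open>\<sigma> < \<delta>\<close> that in auto)
  have "continuous_on (-{0}) f"
    by (rule continuous_on_vector_derivative) (auto intro: has_vector_derivative_at_within assms(6))
  then have f_meas: "f \<in> borel_measurable borel"
    by (intro borel_measurable_continuous_countable_exceptions[of "{0}"]) auto
  have Lp_bound: "Lp_norm p (\<lambda>x. f (x + h) - f x)
      \<le> (LINT t|lborel. increment_profile \<sigma> C t powr p) powr (1 / p) * h powr (1 / p - \<sigma>)"
    if "h > 0" for h
    using assms(1,2,4) \<open>\<sigma> * p < 1\<close> that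
    by (intro Lp_norm_increment_le[OF f_meas assms(6) bound bound']) auto
  have "in_Lp p f"
    using assms(1,4) \<open>\<sigma> * p < 1\<close> \<open>\<delta> * p > 1\<close>
    by (intro in_Lp_of_abs_powr_bounds[OF f_meas _ _ _ _ assms(7,8)]) auto
  moreover have "omega_p p f \<in> O[at_right 0](\<lambda>\<delta>. \<delta> powr (1 / p - \<sigma>))"
    by (rule omega_p_bigo_powr[OF _ Lp_bound]) (use \<open>\<sigma> < 1 / p\<close> in linarith)
  ultimately show ?thesis
    unfolding Lip_class_def by simp
qed

end
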